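(* For any positive integer $k$, there exist connected graphs $H$ and $G$ with $H \subset G$ such that both $\frac{\dim_f(H)}{\dim_f(G)}$ and $\frac{\dim_{k,f}(H)}{\dim_{k,f}(G)}$ can be arbitrarily large; that is, for every real $C>0$ there exist connected graphs $H\subset G$ with $\frac{\dim_f(H)}{\dim_f(G)}>C$ and $\frac{\dim_{k,f}(H)}{\dim_{k,f}(G)}>C$.
   Context: $H\subset G$ means $H$ is a subgraph of $G$. $d(x,y)$ is the distance in $G$. For a function $g$ on $V(G)$ and $U\subseteq V(G)$, $g(U)=\sum_{s\in U}g(s)$. $R\{x,y\}=\{z: d(x,z)\ne d(y,z)\}$; $g:V(G)\to[0,1]$ is a resolving function if $g(R\{x,y\})\ge1$ for all distinct $x,y$; $\dim_f(G)$ is the minimum of $g(V(G))$ over resolving functions. For a positive integer $k$, $d_k(x,y)=\min\{d(x,y),k+1\}$, $R_k\{x,y\}=\{z: d_k(x,z)\neq d_k(y,z)\}$; $h:V(G)\to[0,1]$ is a $k$-truncated resolving function if $h(R_k\{x,y\})\ge 1$ for all distinct $x,y$, and $\dim_{k,f}(G)$ is the minimum of $h(V(G))$ over such $h$. *)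

theory Defs
  imports Complex_Main
begin

type_synonym graph = "nat set \<times> nat set set"

definition verts :: "graph \<Rightarrow> nat set" where "verts G = fst G"
definition edges :: "graph \<Rightarrow> nat set set" where "edges G = snd G"

definition simple_graph :: "graph \<Rightarrow> bool" where
  "simple_graph G \<longleftrightarrow> finite (verts G) \<and>
     (\<forall>e\<in>edges G. \<exists>x y. x \<noteq> y \<and> x \<in> verts G \<and> y \<in> verts G \<and> e = {x, y})"

definition walk :: "graph \<Rightarrow> nat list \<Rightarrow> bool" where
  "walk G xs \<longleftrightarrow> xs \<noteq> [] \<and> set xs \<subseteq> verts G \<and>
     (\<forall>i. Suc i < length xs \<longrightarrow> {xs ! i, xs ! Suc i} \<in> edges G)"

definition reach_in :: "graph \<Rightarrow> nat \<Rightarrow> nat \<Rightarrow> nat \<Rightarrow> bool" where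
  "reach_in G n x y \<longleftrightarrow> (\<exists>xs. walk G xs \<and> hd xs = x \<and> last xs = y \<and> length xs = Suc n)"

definition connected_graph :: "graph \<Rightarrow> bool" where
  "connected_graph G \<longleftrightarrow> simple_graph G \<and> verts G \<noteq> {} \<and>
     (\<forall>x\<in>verts G. \<forall>y\<in>verts G. \<exists>n. reach_in G n x y)"

definition gdist :: "graph \<Rightarrow> nat \<Rightarrow> nat \<Rightarrow> nat" where
  "gdist G x y = (LEAST n. reach_in G n x y)"

definition subgraph :: "graph \<Rightarrow> graph \<Rightarrow> bool" where
  "subgraph H G \<longleftrightarrow> verts H \<subseteq> verts G \<and> edges H \<subseteq> edges G"

definition resolving_set_of :: "graph \<Rightarrow> nat \<Rightarrow> nat \<Rightarrow> nat set" where
  "resolving_set_of G x y = {z \<in> verts G. gdist G x z \<noteq> gdist G y z}"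

definition resolving_function :: "graph \<Rightarrow> (nat \<Rightarrow> real) \<Rightarrow> bool" where
  "resolving_function G g \<longleftrightarrow> (\<forall>v\<in>verts G. 0 \<le> g v \<and> g v \<le> 1) \<and>
     (\<forall>x\<in>verts G. \<forall>y\<in>verts G. x \<noteq> y \<longrightarrow> sum g (resolving_set_of G x y) \<ge> 1)"

definition frac_dim :: "graph \<Rightarrow> real" where
  "frac_dim G = Inf {sum g (verts G) | g. resolving_function G g}"

definition tdist :: "nat \<Rightarrow> graph \<Rightarrow> nat \<Rightarrow> nat \<Rightarrow> nat" where
  "tdist k G x y = min (gdist G x y) (k + 1)"

definition trunc_resolving_set_of :: "nat \<Rightarrow> graph \<Rightarrow> nat \<Rightarrow> nat \<Rightarrow> nat set" where
  "trunc_resolving_set_of k G x y = {z \<in> verts G. tdist k G x z \<noteq> tdist k G y z}"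

definition trunc_resolving_function :: "nat \<Rightarrow> graph \<Rightarrow> (nat \<Rightarrow> real) \<Rightarrow> bool" where
  "trunc_resolving_function k G h \<longleftrightarrow> (\<forall>v\<in>verts G. 0 \<le> h v \<and> h v \<le> 1) \<and>
     (\<forall>x\<in>verts G. \<forall>y\<in>verts G. x \<noteq> y \<longrightarrow> sum h (trunc_resolving_set_of k G x y) \<ge> 1)"

definition trunc_frac_dim :: "nat \<Rightarrow> graph \<Rightarrow> real" where
  "trunc_frac_dim k G = Inf {sum h (verts G) | h. trunc_resolving_function k G h}"

end

theory Submission
  imports Defs
begin

text \<open>Let \<open>H\<close> be the star with centre 0 and \<open>m\<^sup>2\<close> leaves, and let \<open>G\<close> add to \<open>H\<close> the
  edges of the \<open>m \<times> m\<close> rook's graph on the leaves. Both graphs have a universal vertex, so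
  their diameter is at most 2 and truncating distances at \<open>k + 1 \<ge> 2\<close> changes nothing.
  Two leaves \<open>u, v\<close> of the star are twins, \<open>R{u,v} = {u,v}\<close>, so a resolving function has
  \<open>g u + g v \<ge> 1\<close> for all such pairs and hence total weight at least \<open>(m\<^sup>2 - 1)/2\<close>.
  In \<open>G\<close> every pair of distinct cells is resolved by \<open>m - 1\<close> cells of one line, so weight 1 on
  the centre and \<open>1/(m - 1)\<close> on every cell resolves \<open>G\<close>, and \<open>dim\<^sub>f(G) \<le> 1 + m\<^sup>2/(m - 1) \<le> 2m\<close>.
  The ratio therefore exceeds \<open>(m - 1)/4\<close>.\<close>

lemma reach_in_0_iff: "reach_in G 0 x y \<longleftrightarrow> x = y \<and> x \<in> verts G"
  unfolding reach_in_def walk_def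
  by (rule iffI) (auto simp: length_Suc_conv intro!: exI[of _ "[x]"])

lemma reach_in_1_iff:
  "reach_in G 1 x y \<longleftrightarrow> {x, y} \<in> edges G \<and> x \<in> verts G \<and> y \<in> verts G"
proof
  assume "reach_in G 1 x y"
  then show "{x, y} \<in> edges G \<and> x \<in> verts G \<and> y \<in> verts G"
    unfolding reach_in_def walk_def by (auto simp: length_Suc_conv)
next
  assume "{x, y} \<in> edges G \<and> x \<in> verts G \<and> y \<in> verts G"
  then show "reach_in G 1 x y"
    unfolding reach_in_def walk_def by (intro exI[of _ "[x, y]"]) (auto simp: less_Suc_eq)
qed

lemma reach_in_2I:
  assumes "{x, c} \<in> edges G" "{c, y} \<in> edges G" "x \<in> verts G" "c \<in> verts G" "y \<in> verts G"
  shows "reach_in G 2 x y"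
  unfolding reach_in_def walk_def using assms
  by (intro exI[of _ "[x, c, y]"]) (auto simp: less_Suc_eq numeral_2_eq_2)

lemma gdist_eqI:
  assumes "reach_in G n x y" "\<And>n'. n' < n \<Longrightarrow> \<not> reach_in G n' x y"
  shows "gdist G x y = n"
  unfolding gdist_def using assms by (metis Least_equality not_less)

lemma simple_graph_edge_neq: "simple_graph G \<Longrightarrow> {x, y} \<in> edges G \<Longrightarrow> x \<noteq> y"
  unfolding simple_graph_def by (metis doubleton_eq_iff insert_absorb2)

definition universal_vertex :: "graph \<Rightarrow> nat \<Rightarrow> bool" where
  "universal_vertex G c \<longleftrightarrow> c \<in> verts G \<and> (\<forall>v\<in>verts G. v \<noteq> c \<longrightarrow> {c, v} \<in> edges G)"

lemma
  assumes G: "simple_graph G" "universal_vertex G c" and x: "x \<in> verts G" and y: "y \<in> verts G"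
  shows gdist_universal_vertex:
      "gdist G x y = (if x = y then 0 else if {x, y} \<in> edges G then 1 else 2)"
    and reach_in_gdist_universal_vertex: "reach_in G (gdist G x y) x y"
proof -
  let ?d = "if x = y then 0 else if {x, y} \<in> edges G then 1 else 2 :: nat"
  have "reach_in G ?d x y"
  proof (cases "x = y \<or> {x, y} \<in> edges G")
    case True
    then show ?thesis
      using x y by (cases "x = y") (simp_all add: reach_in_0_iff reach_in_1_iff[unfolded One_nat_def])
  next
    case False
    then have "{x, c} \<in> edges G" "{c, y} \<in> edges G" "c \<in> verts G"
      using G(2) x y unfolding universal_vertex_def by (metis insert_commute)+
    then show ?thesis using False reach_in_2I x y by simp
  qed
  moreover have "\<not> reach_in G n x y" if "n < ?d" for n
    using that simple_graph_edge_neq[OF G(1), of x y]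
    by (auto simp: reach_in_0_iff reach_in_1_iff[unfolded One_nat_def] less_Suc_eq numeral_2_eq_2
        split: if_splits)
  ultimately show "gdist G x y = ?d" and "reach_in G (gdist G x y) x y"
    using gdist_eqI by auto
qed

lemma connected_graph_universal_vertex:
  "simple_graph G \<Longrightarrow> universal_vertex G c \<Longrightarrow> connected_graph G"
  unfolding connected_graph_def
  by (metis empty_iff reach_in_gdist_universal_vertex universal_vertex_def)

lemma gdist_eq_0_iff:
  assumes "connected_graph G" "x \<in> verts G" "y \<in> verts G"
  shows "gdist G x y = 0 \<longleftrightarrow> x = y"
proof
  obtain n where "reach_in G n x y"
    using assms unfolding connected_graph_def by blast
  then have "reach_in G (gdist G x y) x y"
    unfolding gdist_def by (rule LeastI)
  then show "gdist G x y = 0 \<Longrightarrow> x = y" by (simp add: reach_in_0_iff)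
next
  show "x = y \<Longrightarrow> gdist G x y = 0"
    using assms(2) by (intro gdist_eqI) (auto simp: reach_in_0_iff)
qed

lemma mem_resolving_set_of:
  assumes "connected_graph G" "x \<in> verts G" "y \<in> verts G" "x \<noteq> y"
  shows "x \<in> resolving_set_of G x y"
  using assms gdist_eq_0_iff[OF assms(1) assms(2) assms(2)]
    gdist_eq_0_iff[OF assms(1) assms(3) assms(2)]
  unfolding resolving_set_of_def by auto

lemma resolving_set_of_commute: "resolving_set_of G x y = resolving_set_of G y x"
  unfolding resolving_set_of_def by auto

lemma resolving_function_const_one:
  assumes "connected_graph G"
  shows "resolving_function G (\<lambda>_. 1)"
proof -
  have "finite (resolving_set_of G x y)" for x y
    using assms unfolding connected_graph_def simple_graph_def resolving_set_of_def by simp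
  then have "1 \<le> card (resolving_set_of G x y)"
    if "x \<in> verts G" "y \<in> verts G" "x \<noteq> y" for x y
    using mem_resolving_set_of[OF assms that] by (metis card_0_eq empty_iff less_one not_le)
  then show ?thesis unfolding resolving_function_def by simp
qed

lemma frac_dim_le:
  assumes "resolving_function G g"
  shows "frac_dim G \<le> sum g (verts G)"
  unfolding frac_dim_def
proof (rule cInf_lower)
  show "bdd_below {sum g (verts G) |g. resolving_function G g}"
    by (rule bdd_belowI[of _ 0]) (auto simp: resolving_function_def intro: sum_nonneg)
qed (use assms in auto)

lemma frac_dim_ge:
  assumes "resolving_function G g" "\<And>g. resolving_function G g \<Longrightarrow> b \<le> sum g (verts G)"
  shows "b \<le> frac_dim G"
  unfolding frac_dim_def by (rule cInf_greatest) (use assms in auto)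

lemma one_le_frac_dim:
  assumes G: "connected_graph G" and "x \<in> verts G" "y \<in> verts G" "x \<noteq> y"
  shows "1 \<le> frac_dim G"
proof (rule frac_dim_ge[OF resolving_function_const_one[OF G]])
  fix g assume g: "resolving_function G g"
  have "1 \<le> sum g (resolving_set_of G x y)"
    using g assms unfolding resolving_function_def by auto
  also have "\<dots> \<le> sum g (verts G)"
    using G g unfolding connected_graph_def simple_graph_def resolving_function_def
    by (intro sum_mono2) (auto simp: resolving_set_of_def)
  finally show "1 \<le> sum g (verts G)" .
qed

lemma trunc_frac_dim_eq_frac_dim:
  assumes "\<And>x y. x \<in> verts G \<Longrightarrow> y \<in> verts G \<Longrightarrow> gdist G x y \<le> k + 1"
  shows "trunc_frac_dim k G = frac_dim G"
proof -
  have "trunc_resolving_set_of k G x y = resolving_set_of G x y"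
    if "x \<in> verts G" "y \<in> verts G" for x y
    using assms that unfolding trunc_resolving_set_of_def resolving_set_of_def tdist_def
    by (auto simp: min_def)
  then have "trunc_resolving_function k G = resolving_function G"
    unfolding trunc_resolving_function_def resolving_function_def by auto
  then show ?thesis unfolding trunc_frac_dim_def frac_dim_def by simp
qed

lemma trunc_frac_dim_universal_vertex:
  assumes "simple_graph G" "universal_vertex G c" "1 \<le> k"
  shows "trunc_frac_dim k G = frac_dim G"
  using assms by (intro trunc_frac_dim_eq_frac_dim) (simp add: gdist_universal_vertex)

lemma card_minus_one_half_le_sum:
  fixes g :: "'a \<Rightarrow> real"
  assumes L: "finite L" and nonneg: "\<And>u. u \<in> L \<Longrightarrow> 0 \<le> g u"
    and pair: "\<And>u v. u \<in> L \<Longrightarrow> v \<in> L \<Longrightarrow> u \<noteq> v \<Longrightarrow> 1 \<le> g u + g v"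
  shows "(real (card L) - 1) / 2 \<le> sum g L"
proof (cases "\<forall>u\<in>L. 1/2 \<le> g u")
  case True
  then have "real (card L) * (1/2) \<le> sum g L"
    using sum_mono[of L "\<lambda>_. 1/2" g] by simp
  then show ?thesis by (simp add: field_simps)
next
  case False
  then obtain u where u: "u \<in> L" "g u < 1/2" by auto
  then have "\<forall>v\<in>L - {u}. 1/2 \<le> g v" using pair by force
  then have "real (card (L - {u})) * (1/2) \<le> sum g (L - {u})"
    using sum_mono[of "L - {u}" "\<lambda>_. 1/2" g] by simp
  moreover have "sum g L = g u + sum g (L - {u})"
    using L u(1) by (simp add: sum.remove)
  moreover have "real (card (L - {u})) = real (card L) - 1"
  proof -
    have "1 \<le> card L" using L u(1) by (metis card_0_eq empty_iff less_one not_le)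
    then show ?thesis using L u(1) by (simp add: of_nat_diff)
  qed
  ultimately show ?thesis using nonneg[OF u(1)] by (simp add: field_simps)
qed

definition star_graph :: "nat \<Rightarrow> graph" where
  "star_graph n = ({0..n}, (\<lambda>v. {0, v}) ` {1..n})"

lemma verts_star_graph [simp]: "verts (star_graph n) = {0..n}"
  by (simp add: star_graph_def verts_def)

lemma edges_star_graph: "edges (star_graph n) = (\<lambda>v. {0, v}) ` {1..n}"
  by (simp add: star_graph_def edges_def)

lemma star_graph_edge_iff:
  "{x, y} \<in> edges (star_graph n) \<longleftrightarrow> (x = 0 \<and> y \<in> {1..n}) \<or> (y = 0 \<and> x \<in> {1..n})"
  unfolding edges_star_graph by (auto simp: doubleton_eq_iff)

lemma simple_graph_star_graph: "simple_graph (star_graph n)"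
  unfolding simple_graph_def
proof (intro conjI ballI)
  fix e assume "e \<in> edges (star_graph n)"
  then obtain v where "e = {0, v}" "v \<in> {1..n}"
    unfolding edges_star_graph by auto
  then show "\<exists>x y. x \<noteq> y \<and> x \<in> verts (star_graph n) \<and> y \<in> verts (star_graph n) \<and> e = {x, y}"
    by (intro exI[of _ 0] exI[of _ v]) auto
qed simp

lemma universal_vertex_star_graph: "universal_vertex (star_graph n) 0"
  unfolding universal_vertex_def by (auto simp: star_graph_edge_iff)

lemma connected_graph_star_graph: "connected_graph (star_graph n)"
  by (rule connected_graph_universal_vertex[OF simple_graph_star_graph universal_vertex_star_graph])

lemma resolving_set_of_star_graph_leaves:
  assumes "u \<in> {1..n}" "v \<in> {1..n}"
  shows "resolving_set_of (star_graph n) u v \<subseteq> {u, v}"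
proof
  fix z assume "z \<in> resolving_set_of (star_graph n) u v"
  then have "z \<in> {0..n}" "gdist (star_graph n) u z \<noteq> gdist (star_graph n) v z"
    unfolding resolving_set_of_def by auto
  then show "z \<in> {u, v}"
    using assms
    by (auto simp: gdist_universal_vertex[OF simple_graph_star_graph universal_vertex_star_graph]
        star_graph_edge_iff split: if_splits)
qed

lemma frac_dim_star_graph_ge: "(real n - 1) / 2 \<le> frac_dim (star_graph n)"
proof (rule frac_dim_ge)
  show "resolving_function (star_graph n) (\<lambda>_. 1)"
    by (rule resolving_function_const_one[OF connected_graph_star_graph])
next
  fix g assume g: "resolving_function (star_graph n) g"
  then have nonneg: "\<And>v. v \<in> {0..n} \<Longrightarrow> 0 \<le> g v"
    unfolding resolving_function_def by simp
  have "1 \<le> g u + g v" if "u \<in> {1..n}" "v \<in> {1..n}" "u \<noteq> v" for u v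
  proof -
    have "1 \<le> sum g (resolving_set_of (star_graph n) u v)"
      using g that unfolding resolving_function_def by auto
    also have "\<dots> \<le> sum g {u, v}"
      using resolving_set_of_star_graph_leaves[OF that(1,2)] nonneg that
      by (intro sum_mono2) auto
    finally show ?thesis using that(3) by simp
  qed
  then have "(real (card {1..n}) - 1) / 2 \<le> sum g {1..n}"
    using nonneg by (intro card_minus_one_half_le_sum) auto
  also have "\<dots> \<le> sum g (verts (star_graph n))"
    using nonneg by (intro sum_mono2) auto
  finally show "(real n - 1) / 2 \<le> sum g (verts (star_graph n))" by simp
qed

text \<open>Vertex 0 is the centre; cell \<open>(i, j)\<close> of the \<open>m \<times> m\<close> board, \<open>i, j < m\<close>, is vertex
  \<open>1 + j + m i\<close>.\<close>

definition rook_row :: "nat \<Rightarrow> nat \<Rightarrow> nat" where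
  "rook_row m v = (v - 1) div m"

definition rook_col :: "nat \<Rightarrow> nat \<Rightarrow> nat" where
  "rook_col m v = (v - 1) mod m"

definition rook_cell :: "nat \<Rightarrow> nat \<Rightarrow> nat \<Rightarrow> nat" where
  "rook_cell m i j = Suc (j + m * i)"

definition rook_graph :: "nat \<Rightarrow> graph" where
  "rook_graph m = ({0..m * m}, (\<lambda>v. {0, v}) ` {1..m * m} \<union>
     {{u, v} | u v. u \<in> {1..m * m} \<and> v \<in> {1..m * m} \<and> u \<noteq> v \<and>
        (rook_row m u = rook_row m v \<or> rook_col m u = rook_col m v)})"

lemma rook_row_cell [simp]: "j < m \<Longrightarrow> rook_row m (rook_cell m i j) = i"
  and rook_col_cell [simp]: "j < m \<Longrightarrow> rook_col m (rook_cell m i j) = j"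
  unfolding rook_row_def rook_col_def rook_cell_def by simp_all

lemma rook_cell_mem:
  assumes "i < m" "j < m"
  shows "rook_cell m i j \<in> {1..m * m}"
proof -
  have "j + m * i < m * Suc i" using assms(2) by simp
  also have "\<dots> \<le> m * m" using assms(1) by (intro mult_le_mono2) simp
  finally show ?thesis unfolding rook_cell_def by simp
qed

lemma
  assumes "v \<in> {1..m * m}"
  shows rook_row_less: "rook_row m v < m"
    and rook_col_less: "rook_col m v < m"
    and rook_cell_row_col: "rook_cell m (rook_row m v) (rook_col m v) = v"
proof -
  have "v - 1 < m * m" "0 < m" using assms by (auto intro: gr0I)
  then show "rook_row m v < m" "rook_col m v < m"
    unfolding rook_row_def rook_col_def by (auto simp: less_mult_imp_div_less)
  show "rook_cell m (rook_row m v) (rook_col m v) = v"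
    unfolding rook_cell_def rook_row_def rook_col_def using assms by simp
qed

lemma verts_rook_graph [simp]: "verts (rook_graph m) = {0..m * m}"
  by (simp add: rook_graph_def verts_def)

lemma rook_graph_edge_iff:
  "{x, y} \<in> edges (rook_graph m) \<longleftrightarrow>
     (x = 0 \<and> y \<in> {1..m * m}) \<or> (y = 0 \<and> x \<in> {1..m * m}) \<or>
     (x \<in> {1..m * m} \<and> y \<in> {1..m * m} \<and> x \<noteq> y \<and>
        (rook_row m x = rook_row m y \<or> rook_col m x = rook_col m y))"
  unfolding rook_graph_def edges_def by (auto simp: doubleton_eq_iff)

lemma simple_graph_rook_graph: "simple_graph (rook_graph m)"
  unfolding simple_graph_def
proof (intro conjI ballI)
  fix e assume "e \<in> edges (rook_graph m)"
  then obtain u v where "e = {u, v}" "u \<noteq> v" "u \<in> {0..m * m}" "v \<in> {0..m * m}"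
    unfolding rook_graph_def edges_def by auto
  then show "\<exists>x y. x \<noteq> y \<and> x \<in> verts (rook_graph m) \<and> y \<in> verts (rook_graph m) \<and> e = {x, y}"
    by (auto simp: rook_graph_def verts_def)
qed (simp add: rook_graph_def verts_def)

lemma universal_vertex_rook_graph: "universal_vertex (rook_graph m) 0"
  unfolding universal_vertex_def by (auto simp: rook_graph_edge_iff)

lemma connected_graph_rook_graph: "connected_graph (rook_graph m)"
  by (rule connected_graph_universal_vertex[OF simple_graph_rook_graph universal_vertex_rook_graph])

lemmas gdist_rook_graph =
  gdist_universal_vertex[OF simple_graph_rook_graph universal_vertex_rook_graph]

lemma star_graph_subgraph_rook_graph: "subgraph (star_graph (m * m)) (rook_graph m)"
  unfolding subgraph_def edges_star_graph by (auto simp: rook_graph_edge_iff)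

lemma mem_resolving_set_of_rook_graph:
  assumes "x \<in> {1..m * m}" "y \<in> {1..m * m}" "z \<in> {1..m * m}" "x \<noteq> y"
    and "rook_row m z = rook_row m x \<or> rook_col m z = rook_col m x"
    and "rook_row m z \<noteq> rook_row m y" "rook_col m z \<noteq> rook_col m y"
  shows "z \<in> resolving_set_of (rook_graph m) x y"
proof -
  have "z \<noteq> y" using assms(6) by auto
  then have "gdist (rook_graph m) y z = 2"
    using assms by (simp add: gdist_rook_graph rook_graph_edge_iff)
  moreover have "gdist (rook_graph m) x z \<le> 1"
    using assms by (cases "z = x") (auto simp: gdist_rook_graph rook_graph_edge_iff)
  ultimately show ?thesis
    using assms(3) unfolding resolving_set_of_def by auto
qed

text \<open>Two distinct cells are resolved by the \<open>m - 1\<close> cells of a line through \<open>x\<close>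
  that avoid both lines through \<open>y\<close>: the column of \<open>x\<close> if it differs from that of \<open>y\<close>,
  the row of \<open>x\<close> otherwise.\<close>

lemma card_resolving_cells_rook_graph:
  assumes x: "x \<in> {1..m * m}" and y: "y \<in> {1..m * m}" and "x \<noteq> y"
  shows "m - 1 \<le> card (resolving_set_of (rook_graph m) x y - {0})"
proof -
  let ?R = "resolving_set_of (rook_graph m) x y - {0}"
  obtain S where S: "S \<subseteq> ?R" "card S = m - 1"
  proof (cases "rook_col m x = rook_col m y")
    case False
    let ?line = "{..<m} - {rook_row m y}" and ?cell = "\<lambda>i. rook_cell m i (rook_col m x)"
    have "?cell ` ?line \<subseteq> ?R"
    proof (rule image_subsetI)
      fix i assume i: "i \<in> ?line"
      then have "?cell i \<in> {1..m * m}" using rook_col_less[OF x] by (intro rook_cell_mem) auto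
      then show "?cell i \<in> ?R"
        using i False assms rook_col_less[OF x] by (auto intro!: mem_resolving_set_of_rook_graph)
    qed
    moreover have "card (?cell ` ?line) = m - 1"
      using rook_row_less[OF y] by (simp add: card_image inj_on_def rook_cell_def)
    ultimately show ?thesis by (rule that)
  next
    case True
    then have rows: "rook_row m x \<noteq> rook_row m y"
      using \<open>x \<noteq> y\<close> rook_cell_row_col[OF x] rook_cell_row_col[OF y] by metis
    let ?line = "{..<m} - {rook_col m y}" and ?cell = "\<lambda>j. rook_cell m (rook_row m x) j"
    have "?cell ` ?line \<subseteq> ?R"
    proof (rule image_subsetI)
      fix j assume j: "j \<in> ?line"
      then have "?cell j \<in> {1..m * m}" using rook_row_less[OF x] by (intro rook_cell_mem) auto
      then show "?cell j \<in> ?R"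
        using j rows assms by (auto intro!: mem_resolving_set_of_rook_graph)
    qed
    moreover have "card (?cell ` ?line) = m - 1"
      using rook_col_less[OF y] by (simp add: card_image inj_on_def rook_cell_def)
    ultimately show ?thesis by (rule that)
  qed
  have "finite ?R"
    unfolding resolving_set_of_def by simp
  then have "card S \<le> card ?R" using S(1) by (rule card_mono)
  then show ?thesis using S(2) by simp
qed

lemma resolving_function_rook_graph:
  assumes "2 \<le> m"
  shows "resolving_function (rook_graph m) (\<lambda>v. if v = 0 then 1 else 1 / (real m - 1))"
    (is "resolving_function _ ?g")
proof -
  have nonneg: "0 \<le> ?g v" for v using assms by simp
  have "1 \<le> sum ?g (resolving_set_of (rook_graph m) x y)"
    if x: "x \<in> {0..m * m}" and y: "y \<in> {0..m * m}" and "x \<noteq> y" for x y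
  proof -
    let ?R = "resolving_set_of (rook_graph m) x y"
    have fin: "finite ?R" unfolding resolving_set_of_def by simp
    show ?thesis
    proof (cases "x = 0 \<or> y = 0")
      case True
      then have "0 \<in> ?R"
        using mem_resolving_set_of[OF connected_graph_rook_graph] x y \<open>x \<noteq> y\<close>
        by (metis resolving_set_of_commute verts_rook_graph)
      then have "?g 0 \<le> sum ?g ?R" using fin nonneg by (intro member_le_sum)
      then show ?thesis by simp
    next
      case False
      then have "m - 1 \<le> card (?R - {0})"
        using x y \<open>x \<noteq> y\<close> by (intro card_resolving_cells_rook_graph) auto
      then have "real m - 1 \<le> real (card (?R - {0}))"
        using assms by linarith
      then have "1 \<le> real (card (?R - {0})) / (real m - 1)"
        using assms by (simp add: le_divide_eq)
      also have "\<dots> = sum ?g (?R - {0})" by simp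
      also have "\<dots> \<le> sum ?g ?R" using fin nonneg by (intro sum_mono2) auto
      finally show ?thesis .
    qed
  qed
  then show ?thesis
    unfolding resolving_function_def using assms by auto
qed

lemma frac_dim_rook_graph_le:
  assumes "2 \<le> m"
  shows "frac_dim (rook_graph m) \<le> 1 + real m * real m / (real m - 1)"
proof -
  let ?g = "\<lambda>v. if v = 0 then 1 else 1 / (real m - 1)"
  have "{0..m * m} = insert 0 {1..m * m}" by auto
  then have "sum ?g {0..m * m} = 1 + sum ?g {1..m * m}" by simp
  also have "sum ?g {1..m * m} = (\<Sum>v\<in>{1..m * m}. 1 / (real m - 1))"
    by (rule sum.cong) auto
  finally have "sum ?g (verts (rook_graph m)) = 1 + real m * real m / (real m - 1)" by simp
  then show ?thesis using frac_dim_le[OF resolving_function_rook_graph[OF assms]] by simp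
qed

lemma ratio_gt_quarter:
  fixes a b M :: real
  assumes "3 \<le> M" "(M * M - 1) / 2 \<le> a" "0 < b" "b \<le> 1 + M * M / (M - 1)"
  shows "(M - 1) / 4 < a / b"
proof -
  have "9 \<le> M * M" using mult_mono[OF assms(1) assms(1)] assms(1) by simp
  then have "0 \<le> (M * M - 1) / 2" by simp
  then have "0 \<le> a" using assms(2) by linarith
  have "M * M / (M - 1) \<le> M + 2" using assms(1) by (simp add: divide_le_eq algebra_simps)
  then have "b \<le> 2 * M" using assms by linarith
  have "(M - 1) / 4 < (M * M - 1) / (4 * M)" using assms(1) by (simp add: field_simps)
  also have "\<dots> = ((M * M - 1) / 2) / (2 * M)" by simp
  also have "\<dots> \<le> a / (2 * M)" using assms(1,2) by (intro divide_right_mono) auto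
  also have "\<dots> \<le> a / b"
    using \<open>b \<le> 2 * M\<close> \<open>0 \<le> a\<close> assms by (intro divide_left_mono) auto
  finally show ?thesis .
qed

theorem corollary4p2:
  fixes k :: nat and C :: real
  assumes "k \<ge> 1" and "C > 0"
  shows "\<exists>H G. connected_graph H \<and> connected_graph G \<and> subgraph H G \<and>
           frac_dim H / frac_dim G > C \<and>
           trunc_frac_dim k H / trunc_frac_dim k G > C"
proof -
  define m where "m = nat \<lceil>4 * C\<rceil> + 3"
  have "3 \<le> m" unfolding m_def by simp
  have "C \<le> (real m - 1) / 4"
    using real_nat_ceiling_ge[of "4 * C"] unfolding m_def by simp
  let ?H = "star_graph (m * m)" and ?G = "rook_graph m"
  have "(real m - 1) / 4 < frac_dim ?H / frac_dim ?G"
  proof (rule ratio_gt_quarter)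
    show "(real m * real m - 1) / 2 \<le> frac_dim ?H"
      using frac_dim_star_graph_ge[of "m * m"] by simp
    show "0 < frac_dim ?G"
      using one_le_frac_dim[OF connected_graph_rook_graph[of m], of 0 1] \<open>3 \<le> m\<close>
      by (simp add: Suc_le_eq)
    show "frac_dim ?G \<le> 1 + real m * real m / (real m - 1)"
      using frac_dim_rook_graph_le \<open>3 \<le> m\<close> by simp
  qed (use \<open>3 \<le> m\<close> in simp)
  then have "C < frac_dim ?H / frac_dim ?G"
    using \<open>C \<le> (real m - 1) / 4\<close> by linarith
  moreover have "trunc_frac_dim k ?H = frac_dim ?H"
    using simple_graph_star_graph universal_vertex_star_graph assms(1)
    by (rule trunc_frac_dim_universal_vertex)
  moreover have "trunc_frac_dim k ?G = frac_dim ?G"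
    using simple_graph_rook_graph universal_vertex_rook_graph assms(1)
    by (rule trunc_frac_dim_universal_vertex)
  ultimately show ?thesis
    using connected_graph_star_graph connected_graph_rook_graph star_graph_subgraph_rook_graph
    by metis
qed

end
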